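(* Let $Q$ be a quiver and $i$ a mutable vertex such that $\mu_i(Q)$ is a fork (resp. an ice fork) with point of return $i$. Then $i$ is cycle-preserving for $Q$.
   Context: A quiver is a finite directed multigraph with no loops and no oriented 2-cycles, whose vertex set is partitioned into mutable and frozen vertices; arrows between two frozen vertices are ignored. $b_{ik}$ = number of arrows $i\to k$ minus number of arrows $k\to i$; $Q|_S$ is the induced subquiver on $S$; $[n]$ denotes the set of mutable vertices. Mutation $\mu_j$ at mutable $j$: for each path $i\to j\to k$ add $b_{ij}b_{jk}$ arrows $i\to k$, reverse all arrows at $j$, cancel 2-cycles. A 3-vertex quiver (or induced subquiver) is an oriented 3-cycle if it has at most one frozen vertex and its underlying directed graph is not acyclic. A mutable vertex $j$ is cycle-preserving for $Q$ if whenever $Q|_{\{i,j,k\}}$ is an oriented 3-cycle containing $j$, $\mu_j(Q)|_{\{i,j,k\}}$ is also an oriented 3-cycle. Abundant: at least 2 arrows between every pair of vertices at least one of which is mutable. $F^+(r)=\{i: r\to i\}$, $F^-(r)=\{j:j\to r\}$. A fork is an abundant non-acyclic quiver with at most one frozen vertex and a vertex $r$ (point of return) such that $b_{ij}>b_{ri}$ and $b_{ij}>b_{jr}$ for all $i\in F^+(r),j\in F^-(r)$, and the subquivers induced on $F^+(r)$ and $F^-(r)$ are acyclic. An ice fork with point of return $r$ is a quiver with mutable vertices $[n]$ and frozen vertices $u_1,\dots,u_m$ ($m\ge1$) such that each $Q|_{[n]\cup\{u_i\}}$ is a fork with point of return $r$. *)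

theory Defs
  imports Main
begin

text \<open>A quiver: a finite vertex set, a subset of mutable vertices (the others are frozen),
  and the skew-symmetric exchange matrix B, where B i k = #arrows i to k minus #arrows k to i.
  Skew-symmetry encodes the absence of loops and oriented 2-cycles.
  Arrows between two frozen vertices are ignored (see qarrows).\<close>

record 'v quiver =
  verts :: "'v set"
  mut :: "'v set"
  B :: "'v \<Rightarrow> 'v \<Rightarrow> int"

definition is_quiver :: "'v quiver \<Rightarrow> bool" where
  "is_quiver Q \<longleftrightarrow> finite (verts Q) \<and> mut Q \<subseteq> verts Q
     \<and> (\<forall>x y. B Q x y = - B Q y x)
     \<and> (\<forall>x y. x \<notin> verts Q \<or> y \<notin> verts Q \<longrightarrow> B Q x y = 0)"

definition qarrows :: "'v quiver \<Rightarrow> 'v set \<Rightarrow> ('v \<times> 'v) set" where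
  "qarrows Q S = {(x, y). x \<in> S \<and> y \<in> S \<and> x \<in> verts Q \<and> y \<in> verts Q
      \<and> (x \<in> mut Q \<or> y \<in> mut Q) \<and> B Q x y > 0}"

definition restrict_quiver :: "'v quiver \<Rightarrow> 'v set \<Rightarrow> 'v quiver" where
  "restrict_quiver Q S =
     \<lparr> verts = verts Q \<inter> S, mut = mut Q \<inter> S,
       B = (\<lambda>x y. if x \<in> S \<and> y \<in> S then B Q x y else 0) \<rparr>"

text \<open>Mutation at j (matrix form of: add b_ij b_jk arrows i to k for every path i to j to k,
  reverse arrows at j, cancel 2-cycles).\<close>
definition mutate :: "'v \<Rightarrow> 'v quiver \<Rightarrow> 'v quiver" where
  "mutate j Q = Q \<lparr> B := (\<lambda>x y. if x = j \<or> y = j then - B Q x y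
        else B Q x y + max (B Q x j) 0 * max (B Q j y) 0
                     - max (- B Q x j) 0 * max (- B Q j y) 0) \<rparr>"

definition oriented_3cycle :: "'v quiver \<Rightarrow> 'v set \<Rightarrow> bool" where
  "oriented_3cycle Q T \<longleftrightarrow> card T = 3 \<and> T \<subseteq> verts Q \<and> card (T - mut Q) \<le> 1
      \<and> \<not> acyclic (qarrows Q T)"

definition cycle_preserving :: "'v quiver \<Rightarrow> 'v \<Rightarrow> bool" where
  "cycle_preserving Q j \<longleftrightarrow> j \<in> mut Q \<and>
     (\<forall>i k. oriented_3cycle Q {i, j, k} \<longrightarrow> oriented_3cycle (mutate j Q) {i, j, k})"

definition abundant :: "'v quiver \<Rightarrow> bool" where
  "abundant Q \<longleftrightarrow> (\<forall>x \<in> verts Q. \<forall>y \<in> verts Q. x \<noteq> y \<and> (x \<in> mut Q \<or> y \<in> mut Q)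
      \<longrightarrow> \<bar>B Q x y\<bar> \<ge> 2)"

definition Fplus :: "'v quiver \<Rightarrow> 'v \<Rightarrow> 'v set" where
  "Fplus Q r = {i. (r, i) \<in> qarrows Q (verts Q)}"

definition Fminus :: "'v quiver \<Rightarrow> 'v \<Rightarrow> 'v set" where
  "Fminus Q r = {j. (j, r) \<in> qarrows Q (verts Q)}"

definition is_fork :: "'v quiver \<Rightarrow> 'v \<Rightarrow> bool" where
  "is_fork Q r \<longleftrightarrow> abundant Q \<and> \<not> acyclic (qarrows Q (verts Q))
      \<and> card (verts Q - mut Q) \<le> 1 \<and> r \<in> verts Q
      \<and> (\<forall>i \<in> Fplus Q r. \<forall>j \<in> Fminus Q r. B Q i j > B Q r i \<and> B Q i j > B Q j r)
      \<and> acyclic (qarrows Q (Fplus Q r)) \<and> acyclic (qarrows Q (Fminus Q r))"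

definition is_ice_fork :: "'v quiver \<Rightarrow> 'v \<Rightarrow> bool" where
  "is_ice_fork Q r \<longleftrightarrow> verts Q - mut Q \<noteq> {}
      \<and> (\<forall>u \<in> verts Q - mut Q. is_fork (restrict_quiver Q (mut Q \<union> {u})) r)"

end

theory Submission
  imports Defs
begin

text \<open>Mutation at \<open>i\<close> reverses the arrows at \<open>i\<close>, so an oriented 3-cycle \<open>a \<rightarrow> i \<rightarrow> k \<rightarrow> a\<close>
  of \<open>Q\<close> becomes \<open>i \<rightarrow> a\<close>, \<open>k \<rightarrow> i\<close> in \<open>\<mu>\<^sub>i(Q)\<close>: there \<open>a \<in> F\<^sup>+(i)\<close> and \<open>k \<in> F\<^sup>-(i)\<close>.
  If \<open>i\<close> is the point of return of a fork, the fork inequality gives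
  \<open>b'\<^sub>a\<^sub>k > b'\<^sub>i\<^sub>a = b\<^sub>a\<^sub>i > 0\<close>, so \<open>a \<rightarrow> k\<close> in \<open>\<mu>\<^sub>i(Q)\<close>, which closes the cycle \<open>i \<rightarrow> a \<rightarrow> k \<rightarrow> i\<close>.
  For an ice fork one argues in the fork obtained by keeping only the frozen vertex of the triple.\<close>

lemma is_quiver_skew:
  assumes "is_quiver Q"
  shows "B Q x y = - B Q y x"
  using assms unfolding is_quiver_def by blast

lemma verts_mutate [simp]: "verts (mutate j Q) = verts Q"
  and mut_mutate [simp]: "mut (mutate j Q) = mut Q"
  by (simp_all add: mutate_def)

lemma B_mutate_at:
  assumes "x = j \<or> y = j"
  shows "B (mutate j Q) x y = - B Q x y"
  using assms by (auto simp: mutate_def)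

lemma distinct_if_card_3:
  assumes "card {a, b, c} = 3"
  shows "a \<noteq> b" "a \<noteq> c" "b \<noteq> c"
  using assms by (auto simp: card_insert_if split: if_splits)

lemma acyclic_qarrows_ordered_triple:
  assumes "is_quiver Q" and "x \<noteq> y" "x \<noteq> z" "y \<noteq> z"
    and "B Q y x \<le> 0" "B Q z x \<le> 0" "B Q z y \<le> 0"
  shows "acyclic (qarrows Q {x, y, z})"
proof (rule acyclicI_order[where f = "\<lambda>u. if u = x then 2 else if u = y then 1 else 0 :: nat"])
  fix u v
  assume "(u, v) \<in> qarrows Q {x, y, z}"
  then have uv: "u \<in> {x, y, z}" "v \<in> {x, y, z}" "B Q u v > 0"
    unfolding qarrows_def by auto
  have "B Q u u = 0"
    using is_quiver_skew[OF assms(1), of u u] by linarith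
  then show "(if v = x then 2 else if v = y then 1 else 0 :: nat)
      < (if u = x then 2 else if u = y then 1 else 0)"
    using uv assms(2-) by (auto split: if_splits)
qed

text \<open>Otherwise \<open>i\<close> is a source or a sink of the triple, and ordering the other two vertices
  along their arrow (if any) exhibits the triple as acyclic.\<close>
lemma cyclic_triple_has_path_through:
  assumes Q: "is_quiver Q" and "a \<noteq> i" "a \<noteq> k" "i \<noteq> k"
    and "\<not> acyclic (qarrows Q {a, i, k})"
  shows "(B Q a i > 0 \<and> B Q i k > 0) \<or> (B Q k i > 0 \<and> B Q i a > 0)"
proof (rule ccontr)
  assume "\<not> ?thesis"
  then consider
      "B Q a i \<le> 0" "B Q k i \<le> 0" "B Q k a \<le> 0" | "B Q a i \<le> 0" "B Q k i \<le> 0" "B Q a k \<le> 0"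
    | "B Q i a \<le> 0" "B Q i k \<le> 0" "B Q k a \<le> 0" | "B Q i a \<le> 0" "B Q i k \<le> 0" "B Q a k \<le> 0"
    using is_quiver_skew[OF Q, of a i] is_quiver_skew[OF Q, of i k] is_quiver_skew[OF Q, of k a]
    by linarith
  then have "acyclic (qarrows Q {a, i, k})"
  proof cases
    case 1
    then show ?thesis
      using acyclic_qarrows_ordered_triple[OF Q, of i a k] assms(2-4) by (simp add: insert_commute)
  next
    case 2
    then show ?thesis
      using acyclic_qarrows_ordered_triple[OF Q, of i k a] assms(2-4) by (simp add: insert_commute)
  next
    case 3
    then show ?thesis
      using acyclic_qarrows_ordered_triple[OF Q, of a k i] assms(2-4) by (simp add: insert_commute)
  next
    case 4
    then show ?thesis
      using acyclic_qarrows_ordered_triple[OF Q, of k a i] assms(2-4) by (simp add: insert_commute)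
  qed
  with assms(5) show False ..
qed

lemma fork_arrow_across:
  assumes "is_fork R r" and "(r, a) \<in> qarrows R (verts R)" and "(k, r) \<in> qarrows R (verts R)"
  shows "B R a k > B R r a"
  using assms unfolding is_fork_def Fplus_def Fminus_def by blast

lemma ice_fork_arrow_across:
  assumes F: "is_ice_fork R r" and r: "r \<in> mut R"
    and ra: "(r, a) \<in> qarrows R (verts R)" and kr: "(k, r) \<in> qarrows R (verts R)"
    and frozen: "card ({a, r, k} - mut R) \<le> 1"
  shows "B R a k > B R r a"
proof -
  have ak: "a \<in> verts R" "k \<in> verts R"
    using ra kr unfolding qarrows_def by auto
  obtain u where u: "u \<in> verts R - mut R" "{a, k} \<subseteq> mut R \<union> {u}"
  proof (cases "{a, k} \<subseteq> mut R")
    case True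
    moreover obtain u where "u \<in> verts R - mut R"
      using F unfolding is_ice_fork_def by blast
    ultimately show ?thesis using that by blast
  next
    case False
    then obtain u where u: "u \<in> {a, k} - mut R" by blast
    have "finite ({a, r, k} - mut R)" by simp
    then have "\<forall>x \<in> {a, r, k} - mut R. \<forall>y \<in> {a, r, k} - mut R. x = y"
      using frozen card_le_Suc0_iff_eq by (metis One_nat_def)
    then have "{a, k} \<subseteq> mut R \<union> {u}"
      using u by blast
    moreover have "u \<in> verts R - mut R"
      using u ak by blast
    ultimately show ?thesis using that by blast
  qed
  let ?R = "restrict_quiver R (mut R \<union> {u})"
  have "is_fork ?R r"
    using F u(1) unfolding is_ice_fork_def by blast
  then have "B ?R a k > B ?R r a"
    by (rule fork_arrow_across) (use r ra kr u in \<open>auto simp: qarrows_def restrict_quiver_def\<close>)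
  then show ?thesis
    using r u(2) unfolding restrict_quiver_def by auto
qed

lemma oriented_3cycle_mutate_at_point_of_return:
  assumes Q: "is_quiver Q" and i: "i \<in> mut Q"
    and F: "is_fork (mutate i Q) i \<or> is_ice_fork (mutate i Q) i"
    and C: "oriented_3cycle Q {a, i, k}" and ai: "B Q a i > 0" and ik: "B Q i k > 0"
  shows "oriented_3cycle (mutate i Q) {a, i, k}"
proof -
  let ?Q' = "mutate i Q"
  have T: "card {a, i, k} = 3" "{a, i, k} \<subseteq> verts Q" and frozen: "card ({a, i, k} - mut Q) \<le> 1"
    using C unfolding oriented_3cycle_def by auto
  have "a \<in> mut Q \<or> k \<in> mut Q"
  proof (rule ccontr)
    assume "\<not> ?thesis"
    then have "card {a, k} \<le> card ({a, i, k} - mut Q)"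
      by (intro card_mono) auto
    with frozen distinct_if_card_3[OF T(1)] show False by simp
  qed
  moreover have ia': "B ?Q' i a = B Q a i" and ki': "B ?Q' k i = B Q i k"
    using is_quiver_skew[OF Q, of i a] is_quiver_skew[OF Q, of k i] by (simp_all add: B_mutate_at)
  moreover have "B ?Q' a k > B ?Q' i a"
  proof -
    have ia: "(i, a) \<in> qarrows ?Q' (verts ?Q')" and ki: "(k, i) \<in> qarrows ?Q' (verts ?Q')"
      using ai ik ia' ki' T(2) i unfolding qarrows_def by auto
    from F show ?thesis
    proof
      assume "is_fork ?Q' i"
      then show ?thesis using ia ki by (rule fork_arrow_across)
    next
      assume "is_ice_fork ?Q' i"
      then show ?thesis
        using ice_fork_arrow_across[OF _ _ ia ki] i frozen by (simp add: insert_commute)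
    qed
  qed
  ultimately have "(i, a) \<in> qarrows ?Q' {a, i, k}" "(a, k) \<in> qarrows ?Q' {a, i, k}"
    "(k, i) \<in> qarrows ?Q' {a, i, k}"
    using ai ik T(2) i unfolding qarrows_def by auto
  then have "(i, i) \<in> (qarrows ?Q' {a, i, k})\<^sup>+"
    by (meson trancl.r_into_trancl trancl.trancl_into_trancl)
  then have "\<not> acyclic (qarrows ?Q' {a, i, k})"
    unfolding acyclic_def by blast
  with T frozen show ?thesis
    unfolding oriented_3cycle_def by simp
qed

theorem mainTheorem3:
  fixes Q :: "'v quiver" and i :: 'v
  assumes "is_quiver Q" and "i \<in> mut Q"
    and "is_fork (mutate i Q) i \<or> is_ice_fork (mutate i Q) i"
  shows "cycle_preserving Q i"
  unfolding cycle_preserving_def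
proof (intro conjI allI impI)
  show "i \<in> mut Q" by fact
  fix a k
  assume C: "oriented_3cycle Q {a, i, k}"
  then have "card {a, i, k} = 3" "\<not> acyclic (qarrows Q {a, i, k})"
    unfolding oriented_3cycle_def by auto
  from cyclic_triple_has_path_through[OF assms(1) distinct_if_card_3[OF this(1)] this(2)]
  show "oriented_3cycle (mutate i Q) {a, i, k}"
  proof
    assume "B Q a i > 0 \<and> B Q i k > 0"
    then show ?thesis using oriented_3cycle_mutate_at_point_of_return[OF assms C] by blast
  next
    assume "B Q k i > 0 \<and> B Q i a > 0"
    moreover have "{a, i, k} = {k, i, a}" by auto
    ultimately show ?thesis
      using oriented_3cycle_mutate_at_point_of_return[OF assms, of k a] C by auto
  qed
qed

end
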